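(* $\gamma(3)=8$. In particular, the word $abcabacb$ (over three distinct letters $a,b,c$) is s-primitive, and every word of length $9$ over a ternary alphabet is not s-primitive.
   Context: For words $C,S$, $C$ is an \emph{s-cover} of $S$ if for every position $i$ of $S$ there exist indices $j_0<\dots<j_{|C|-1}$ with $S[j_t]=C[t]$ for all $t$ and $i\in\{j_0,\dots,j_{|C|-1}\}$. An s-cover $C$ of $S$ is \emph{non-trivial} if $|C|<|S|$; a word is \emph{s-primitive} if it has no non-trivial s-cover. $\gamma(k)$ is the maximum length of an s-primitive word over an alphabet of size $k$. *)

theory Defs
  imports Main
begin

definition s_cover :: "'a list \<Rightarrow> 'a list \<Rightarrow> bool" where
  "s_cover C S \<longleftrightarrow>
     (\<forall>i < length S. \<exists>j :: nat \<Rightarrow> nat.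
        strict_mono_on {..<length C} j \<and>
        (\<forall>t < length C. j t < length S \<and> S ! (j t) = C ! t) \<and>
        (\<exists>t < length C. j t = i))"

definition s_primitive :: "'a list \<Rightarrow> bool" where
  "s_primitive S \<longleftrightarrow> \<not> (\<exists>C. s_cover C S \<and> length C < length S)"

(* A word over an alphabet of size k is (up to renaming letters) a word using at
   most k distinct letters; we take letters from nat. *)
definition gamma :: "nat \<Rightarrow> nat" where
  "gamma k = (GREATEST n. \<exists>w :: nat list. card (set w) \<le> k \<and> length w = n \<and> s_primitive w)"

end

(* A cover C of a factor u of w = x @ u @ y yields the cover x @ C @ y of w, and covers survive
   any renaming of letters; so a word having a non-s-primitive factor, or being a renaming of a
   non-s-primitive word, is not s-primitive. Up to permutations of the alphabet ten short ternary
   words (from aa to abcabacba) are not s-primitive, and a pruned search shows that every ternary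
   word of length 9 contains one of them as a factor. Conversely abcabacb is checked against all
   its shorter subsequences. Both computations rest on a local description of covers: C covers S
   iff every letter S ! i is matched by a letter C ! t such that the part of C before t embeds into
   the part of S before i, and the part after t into the part after i. *)

theory Submission
  imports Defs "HOL-Library.Sublist"
begin

definition occurrence :: "'a list \<Rightarrow> 'a list \<Rightarrow> (nat \<Rightarrow> nat) \<Rightarrow> bool" where
  "occurrence C S j \<longleftrightarrow>
     strict_mono_on {..<length C} j \<and> (\<forall>t < length C. j t < length S \<and> S ! j t = C ! t)"

lemma s_cover_iff_occurrence:
  "s_cover C S \<longleftrightarrow> (\<forall>i < length S. \<exists>j. occurrence C S j \<and> (\<exists>t < length C. j t = i))"
  unfolding s_cover_def occurrence_def by blast

lemma occurrence_id: "occurrence S S id"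
  by (simp add: occurrence_def strict_mono_on_def)

lemma occurrence_map: "occurrence C S j \<Longrightarrow> occurrence (map f C) (map f S) j"
  by (simp add: occurrence_def)

lemma occurrence_append:
  assumes j1: "occurrence C1 S1 j1" and j2: "occurrence C2 S2 j2"
  obtains j where "occurrence (C1 @ C2) (S1 @ S2) j"
    and "\<forall>t < length C1. j t = j1 t" and "\<forall>t < length C2. j (length C1 + t) = length S1 + j2 t"
proof
  let ?j = "\<lambda>t. if t < length C1 then j1 t else length S1 + j2 (t - length C1)"
  have mono1: "j1 r < j1 s" if "r < s" "s < length C1" for r s
    using j1 that by (simp add: occurrence_def strict_mono_on_def)
  have mono2: "j2 r < j2 s" if "r < s" "s < length C2" for r s
    using j2 that by (simp add: occurrence_def strict_mono_on_def)
  have "?j r < ?j s" if "r < s" "s < length C1 + length C2" for r s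
  proof (cases "s < length C1")
    case False
    then show ?thesis
      using j1 that mono2[of "r - length C1" "s - length C1"]
      by (cases "r < length C1") (auto simp: occurrence_def)
  qed (use that mono1 in auto)
  moreover have "?j t < length (S1 @ S2) \<and> (S1 @ S2) ! ?j t = (C1 @ C2) ! t"
    if "t < length C1 + length C2" for t
    using j1 j2 that by (cases "t < length C1") (auto simp: occurrence_def nth_append)
  ultimately show "occurrence (C1 @ C2) (S1 @ S2) ?j"
    by (simp add: occurrence_def strict_mono_on_def)
qed auto

lemma subseq_imp_occurrence: "subseq C S \<Longrightarrow> \<exists>j. occurrence C S j"
proof (induction rule: list_emb.induct)
  case (list_emb_Nil S)
  show ?case by (simp add: occurrence_def)
next
  case (list_emb_Cons C S y)
  then obtain j where j: "occurrence C S j" by blast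
  have "occurrence [] [y] id"
    by (simp add: occurrence_def)
  from occurrence_append[OF this j] show ?case
    by (metis append_Cons append_Nil)
next
  case (list_emb_Cons2 x y C S)
  then obtain j where j: "occurrence C S j" by blast
  have "occurrence [x] [y] id"
    using list_emb_Cons2.hyps by (auto simp: occurrence_def strict_mono_on_def)
  from occurrence_append[OF this j] show ?case
    by (metis append_Cons append_Nil)
qed

lemma occurrence_take:
  assumes "occurrence C S j" and "\<forall>t < k. j t < m"
  shows "occurrence (take k C) (take m S) j"
  using assms by (auto simp: occurrence_def strict_mono_on_def)

lemma occurrence_drop:
  assumes j: "occurrence C S j" and m: "\<forall>t < length C. k \<le> t \<longrightarrow> m \<le> j t"
  shows "occurrence (drop k C) (drop m S) (\<lambda>u. j (k + u) - m)"
  unfolding occurrence_def strict_mono_on_def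
proof (intro conjI allI impI)
  fix r s assume "r \<in> {..<length (drop k C)} \<and> s \<in> {..<length (drop k C)} \<and> r < s"
  then have "k + r < k + s" "k + s < length C"
    by auto
  with j m have "j (k + r) < j (k + s)" "m \<le> j (k + r)"
    by (auto simp: occurrence_def strict_mono_on_def)
  then show "j (k + r) - m < j (k + s) - m"
    by simp
next
  fix u assume "u < length (drop k C)"
  then have "m \<le> j (k + u)" "j (k + u) < length S" "S ! j (k + u) = C ! (k + u)"
    using j m by (auto simp: occurrence_def)
  then show "j (k + u) - m < length (drop m S)" "drop m S ! (j (k + u) - m) = drop k C ! u"
    using \<open>u < length (drop k C)\<close> by auto
qed

lemma occurrence_imp_subseq: "occurrence C S j \<Longrightarrow> subseq C S"
proof (induction C arbitrary: S j)
  case Nil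
  show ?case by simp
next
  case (Cons a C)
  let ?k = "j 0"
  have k: "?k < length S" "S ! ?k = a"
    using Cons.prems by (auto simp: occurrence_def)
  have "\<forall>t < length (a # C). 1 \<le> t \<longrightarrow> Suc ?k \<le> j t"
    using Cons.prems by (auto simp: occurrence_def strict_mono_on_def Suc_le_eq)
  from occurrence_drop[OF Cons.prems this]
  have "subseq C (drop (Suc ?k) S)"
    by (auto intro: Cons.IH)
  then have "subseq (a # C) (take ?k S @ S ! ?k # drop (Suc ?k) S)"
    using k by (intro list_emb_append2) simp
  then show ?case
    using id_take_nth_drop[OF k(1)] by simp
qed

lemma occurrence_through_iff:
  assumes t: "t < length C" and i: "i < length S"
  shows "(\<exists>j. occurrence C S j \<and> j t = i) \<longleftrightarrow>
    C ! t = S ! i \<and> subseq (take t C) (take i S) \<and> subseq (drop (Suc t) C) (drop (Suc i) S)"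
proof
  assume "\<exists>j. occurrence C S j \<and> j t = i"
  then obtain j where j: "occurrence C S j" and ji: "j t = i" by blast
  have mono: "j r < j s" if "r < s" "s < length C" for r s
    using j that by (simp add: occurrence_def strict_mono_on_def)
  have "\<forall>u < t. j u < i"
    using mono[of _ t] t ji by auto
  from occurrence_take[OF j this] have "subseq (take t C) (take i S)"
    by (rule occurrence_imp_subseq)
  moreover have "\<forall>u < length C. Suc t \<le> u \<longrightarrow> Suc i \<le> j u"
  proof (intro allI impI)
    fix u assume "u < length C" "Suc t \<le> u"
    then show "Suc i \<le> j u"
      using mono[of t u] ji by simp
  qed
  from occurrence_drop[OF j this] have "subseq (drop (Suc t) C) (drop (Suc i) S)"
    by (rule occurrence_imp_subseq)
  moreover have "S ! j t = C ! t"
    using j t by (simp add: occurrence_def)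
  ultimately show "C ! t = S ! i \<and> subseq (take t C) (take i S) \<and>
      subseq (drop (Suc t) C) (drop (Suc i) S)"
    using ji by simp
next
  assume "C ! t = S ! i \<and> subseq (take t C) (take i S) \<and> subseq (drop (Suc t) C) (drop (Suc i) S)"
  then obtain j1 j2 where "C ! t = S ! i"
    and j1: "occurrence (take t C) (take i S) j1"
    and j2: "occurrence (drop (Suc t) C) (drop (Suc i) S) j2"
    using subseq_imp_occurrence by metis
  then have "occurrence [C ! t] [S ! i] id"
    by (auto simp: occurrence_def strict_mono_on_def)
  then obtain j' where j': "occurrence ([C ! t] @ drop (Suc t) C) ([S ! i] @ drop (Suc i) S) j'"
    and "\<forall>u < length [C ! t]. j' u = id u"
    by (rule occurrence_append[OF _ j2])
  then have "j' 0 = 0"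
    by simp
  obtain j where "occurrence (take t C @ [C ! t] @ drop (Suc t) C) (take i S @ [S ! i] @ drop (Suc i) S) j"
    and val: "\<forall>u < length ([C ! t] @ drop (Suc t) C). j (length (take t C) + u) = length (take i S) + j' u"
    by (rule occurrence_append[OF j1 j'])
  then have "occurrence C S j"
    using t i by (simp add: Cons_nth_drop_Suc)
  moreover have "j t = i"
    using val[rule_format, of 0] \<open>j' 0 = 0\<close> t i by simp
  ultimately show "\<exists>j. occurrence C S j \<and> j t = i"
    by blast
qed

lemma s_cover_iff:
  "s_cover C S \<longleftrightarrow> (\<forall>i < length S. \<exists>t < length C.
     C ! t = S ! i \<and> subseq (take t C) (take i S) \<and> subseq (drop (Suc t) C) (drop (Suc i) S))"
proof -
  have "(\<exists>j. occurrence C S j \<and> (\<exists>t < length C. j t = i)) \<longleftrightarrow> (\<exists>t < length C.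
     C ! t = S ! i \<and> subseq (take t C) (take i S) \<and> subseq (drop (Suc t) C) (drop (Suc i) S))"
    if "i < length S" for i
    using occurrence_through_iff[OF _ that] by blast
  then show ?thesis
    unfolding s_cover_iff_occurrence by simp
qed

lemma s_cover_refl: "s_cover S S"
  unfolding s_cover_iff_occurrence
proof (intro allI impI)
  fix i assume "i < length S"
  with occurrence_id[of S] show "\<exists>j. occurrence S S j \<and> (\<exists>t < length S. j t = i)"
    by (intro exI[of _ id]) auto
qed

lemma s_cover_imp_subseq:
  assumes "s_cover C S" and "S \<noteq> []"
  shows "subseq C S"
proof -
  from assms obtain j where "occurrence C S j"
    unfolding s_cover_iff_occurrence by (meson length_greater_0_conv)
  then show ?thesis
    by (rule occurrence_imp_subseq)
qed

lemma s_cover_map: "s_cover C S \<Longrightarrow> s_cover (map f C) (map f S)"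
  unfolding s_cover_iff_occurrence length_map by (metis occurrence_map)

lemma s_cover_append:
  assumes cover1: "s_cover C1 S1" "subseq C1 S1" and cover2: "s_cover C2 S2" "subseq C2 S2"
  shows "s_cover (C1 @ C2) (S1 @ S2)"
  unfolding s_cover_iff_occurrence
proof (intro allI impI)
  fix i assume i: "i < length (S1 @ S2)"
  obtain j1 j2 where j1: "occurrence C1 S1 j1" and j2: "occurrence C2 S2 j2"
    using cover1(2) cover2(2) subseq_imp_occurrence by metis
  show "\<exists>j. occurrence (C1 @ C2) (S1 @ S2) j \<and> (\<exists>t < length (C1 @ C2). j t = i)"
  proof (cases "i < length S1")
    case True
    then obtain j1' t where j1': "occurrence C1 S1 j1'" "t < length C1" "j1' t = i"
      using cover1(1) unfolding s_cover_iff_occurrence by blast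
    obtain j where j: "occurrence (C1 @ C2) (S1 @ S2) j" "\<forall>t < length C1. j t = j1' t"
      by (rule occurrence_append[OF j1'(1) j2])
    with j1' have "j t = i" "t < length (C1 @ C2)"
      by auto
    with j(1) show ?thesis
      by blast
  next
    case False
    with i have "i - length S1 < length S2"
      by simp
    then obtain j2' t where j2': "occurrence C2 S2 j2'" "t < length C2" "j2' t = i - length S1"
      using cover2(1) unfolding s_cover_iff_occurrence by blast
    obtain j where j: "occurrence (C1 @ C2) (S1 @ S2) j"
      "\<forall>t < length C2. j (length C1 + t) = length S1 + j2' t"
      by (rule occurrence_append[OF j1 j2'(1)])
    with j2' False have "j (length C1 + t) = i" "length C1 + t < length (C1 @ C2)"
      by auto
    with j(1) show ?thesis
      by blast
  qed
qed

lemma s_primitive_iff_subseqs: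
  "s_primitive S \<longleftrightarrow> (\<forall>C \<in> set (subseqs S). length C < length S \<longrightarrow> \<not> s_cover C S)"
  unfolding s_primitive_def in_set_subseqs using s_cover_imp_subseq by force

lemma not_s_primitive_map: "\<not> s_primitive w \<Longrightarrow> \<not> s_primitive (map f w)"
  unfolding s_primitive_def using s_cover_map length_map by metis

lemma not_s_primitive_sublist:
  assumes "sublist u w" and "\<not> s_primitive u"
  shows "\<not> s_primitive w"
proof -
  obtain x y where w: "w = x @ u @ y"
    using assms(1) by (auto simp: sublist_def)
  obtain C where C: "s_cover C u" "length C < length u"
    using assms(2) by (auto simp: s_primitive_def)
  then have "subseq C u"
    by (auto intro: s_cover_imp_subseq)
  then have "s_cover (C @ y) (u @ y)"
    by (rule s_cover_append[OF C(1) _ s_cover_refl subseq_order.order_refl])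
  moreover have "subseq (C @ y) (u @ y)"
    using \<open>subseq C u\<close> by (rule list_emb_append_mono) simp
  ultimately have "s_cover (x @ C @ y) w"
    unfolding w by (rule s_cover_append[OF s_cover_refl subseq_order.order_refl])
  moreover have "length (x @ C @ y) < length w"
    using C(2) w by simp
  ultimately show ?thesis
    by (auto simp: s_primitive_def)
qed

(* Every factor of a word is a suffix of one of its prefixes, so it suffices to test suffixes
   while extending words letter by letter. *)
fun words_avoiding :: "'a list \<Rightarrow> 'a list list \<Rightarrow> nat \<Rightarrow> 'a list list" where
  "words_avoiding A P 0 = [[]]"
| "words_avoiding A P (Suc n) =
     [w @ [a]. w \<leftarrow> words_avoiding A P n, a \<leftarrow> A, \<not> (\<exists>p \<in> set P. suffix p (w @ [a]))]"

lemma words_avoiding_complete: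
  "length w = n \<Longrightarrow> set w \<subseteq> set A \<Longrightarrow> \<forall>p \<in> set P. \<not> sublist p w \<Longrightarrow>
    w \<in> set (words_avoiding A P n)"
proof (induction n arbitrary: w)
  case 0
  then show ?case by simp
next
  case (Suc n)
  then obtain u a where w: "w = u @ [a]"
    by (metis length_Suc_conv_rev)
  have "u \<in> set (words_avoiding A P n)"
    using Suc.prems w by (intro Suc.IH) (auto dest: sublist_order.order_trans[OF _ sublist_append_rightI])
  moreover have "a \<in> set A" "\<forall>p \<in> set P. \<not> suffix p w"
    using Suc.prems w by auto
  ultimately show ?case
    unfolding w by auto
qed

definition base_patterns :: "nat list list" where
  "base_patterns = [[0,0], [0,1,0,1], [0,1,0,2,1,2], [0,1,2,0,1,2], [0,1,0,2,0,1,2],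
     [0,1,2,0,2,1,2], [0,1,2,1,0,1,2], [0,1,0,2,1,0,1,2], [0,1,2,1,0,2,1,2],
     [0,1,2,0,1,0,2,1,0]]"

definition patterns :: "nat list list" where
  "patterns = [map ((!) \<sigma>) p. p \<leftarrow> base_patterns, \<sigma> \<leftarrow> filter distinct (List.n_lists 3 [0, 1, 2])]"

lemma base_patterns_not_s_primitive: "\<forall>p \<in> set base_patterns. \<not> s_primitive p"
  unfolding s_primitive_iff_subseqs s_cover_iff by code_simp

lemma patterns_not_s_primitive:
  assumes "p \<in> set patterns"
  shows "\<not> s_primitive p"
proof -
  from assms obtain q \<sigma> where "q \<in> set base_patterns" and p: "p = map ((!) \<sigma>) q"
    unfolding patterns_def by auto
  with base_patterns_not_s_primitive have "\<not> s_primitive q"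
    by blast
  then show ?thesis
    unfolding p by (rule not_s_primitive_map)
qed

lemma words_avoiding_patterns_9: "words_avoiding [0, 1, 2] patterns 9 = []"
  by code_simp

lemma ternary_word_contains_pattern:
  fixes w :: "nat list"
  assumes "length w = 9" and "set w \<subseteq> {..<3}"
  shows "\<exists>p \<in> set patterns. sublist p w"
proof -
  have "set w \<subseteq> set [0, 1, 2]"
    using assms(2) by auto
  with assms(1) words_avoiding_complete[of w 9 "[0, 1, 2]" patterns] show ?thesis
    unfolding words_avoiding_patterns_9 by auto
qed

lemma ex_nat_word_map:
  assumes "card (set w) \<le> n"
  obtains v :: "nat list" and h where "set v \<subseteq> {..<n}" and "w = map h v"
proof -
  let ?I = "{0..<card (set w)}"
  obtain h where h: "bij_betw h ?I (set w)"
    using ex_bij_betw_nat_finite by blast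
  let ?v = "map (inv_into ?I h) w"
  have "set ?v \<subseteq> ?I"
    using h by (auto simp: bij_betw_def intro: inv_into_into)
  with assms have "set ?v \<subseteq> {..<n}"
    by auto
  moreover have "w = map h ?v"
    using h by (auto simp: bij_betw_def f_inv_into_f intro: map_idI[symmetric])
  ultimately show ?thesis
    by (rule that)
qed

lemma length_9_not_s_primitive:
  assumes "length w = 9" and "card (set w) \<le> 3"
  shows "\<not> s_primitive w"
proof -
  obtain v :: "nat list" and h where v: "set v \<subseteq> {..<3}" and w: "w = map h v"
    using ex_nat_word_map[OF assms(2)] .
  with assms(1) obtain p where "p \<in> set patterns" "sublist p v"
    using ternary_word_contains_pattern by auto
  then have "\<not> s_primitive v"
    using patterns_not_s_primitive not_s_primitive_sublist by blast
  then show ?thesis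
    unfolding w by (rule not_s_primitive_map)
qed

lemma s_primitive_abcabacb:
  assumes "distinct [a, b, c]"
  shows "s_primitive [a, b, c, a, b, a, c, b]"
proof (rule ccontr)
  let ?f = "\<lambda>x. if x = a then 0 else if x = b then 1 else 2 :: nat"
  assume "\<not> s_primitive [a, b, c, a, b, a, c, b]"
  then have "\<not> s_primitive (map ?f [a, b, c, a, b, a, c, b])"
    by (rule not_s_primitive_map)
  moreover have "map ?f [a, b, c, a, b, a, c, b] = [0, 1, 2, 0, 1, 0, 2, 1]"
    using assms by auto
  moreover have "s_primitive [0, 1, 2, 0, 1, 0, 2, 1 :: nat]"
    unfolding s_primitive_iff_subseqs s_cover_iff by code_simp
  ultimately show False
    by simp
qed

lemma s_primitive_ternary_length_le_8:
  assumes "card (set w) \<le> 3" and "s_primitive w"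
  shows "length w \<le> 8"
proof (rule ccontr)
  assume "\<not> length w \<le> 8"
  then have "length (take 9 w) = 9"
    by simp
  moreover have "card (set (take 9 w)) \<le> card (set w)"
    by (rule card_mono) (simp_all add: set_take_subset)
  with assms(1) have "card (set (take 9 w)) \<le> 3"
    by simp
  ultimately have "\<not> s_primitive (take 9 w)"
    by (rule length_9_not_s_primitive)
  then have "\<not> s_primitive w"
    by (rule not_s_primitive_sublist[OF sublist_take])
  with assms(2) show False
    by contradiction
qed

lemma gamma_3: "gamma 3 = 8"
  unfolding gamma_def
proof (rule Greatest_equality)
  have "s_primitive [0, 1, 2, 0, 1, 0, 2, 1 :: nat]"
    by (rule s_primitive_abcabacb) simp
  then show "\<exists>w :: nat list. card (set w) \<le> 3 \<and> length w = 8 \<and> s_primitive w"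
    by (intro exI[of _ "[0, 1, 2, 0, 1, 0, 2, 1]"]) (simp add: insert_commute)
next
  fix n assume "\<exists>w :: nat list. card (set w) \<le> 3 \<and> length w = n \<and> s_primitive w"
  then show "n \<le> 8"
    using s_primitive_ternary_length_le_8 by blast
qed

theorem mainTheorem5:
  shows "gamma 3 = 8
    \<and> (\<forall>(a :: 'a) b c. a \<noteq> b \<and> a \<noteq> c \<and> b \<noteq> c \<longrightarrow> s_primitive [a, b, c, a, b, a, c, b])
    \<and> (\<forall>w :: 'b list. length w = 9 \<and> card (set w) \<le> 3 \<longrightarrow> \<not> s_primitive w)"
  using gamma_3 length_9_not_s_primitive by (auto intro: s_primitive_abcabacb)

end
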